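(* Let $G$ be a finite connected graph with at least one edge and let $\phi$ be an order map for $G$. Then $\phi$ is tree-compatible if and only if for all spanning trees $T,T'$ of $G$ and every $k\in\{0,\dots,|E(G)|-1\}$, $$T\cap\{\phi_1(T),\dots,\phi_k(T)\}=T'\cap\{\phi_1(T),\dots,\phi_k(T)\}\ \Longrightarrow\ \forall j\in\{1,\dots,k+1\},\ \phi_j(T)=\phi_j(T').$$
   Context: An order map assigns to each spanning tree $T$ of $G$ a total order $\phi(T)$ on $E(G)$; $\phi_k(T)$ denotes the $k$-th smallest edge for $\phi(T)$. Let $m=|E(G)|$. A decision tree is a perfect binary tree of depth $m-1$ whose nodes are labelled by edges of $G$ so that along every root-to-leaf path the labels form a permutation of $E(G)$. For a spanning tree $T$, walk down the decision tree from the root: at each node, if its label is not in $T$ go to the left child, otherwise go to the right child; the sequence of labels $e_1,\dots,e_m$ met defines the $(\Delta,T)$-ordering $e_1<\dots<e_m$. The order map $\phi$ is tree-compatible if there exists a decision tree $\Delta$ such that for every spanning tree $T$ the $(\Delta,T)$-ordering coincides with $\phi(T)$. *)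

theory Defs
  imports Main "HOL-Library.Tree"
begin

text \<open>A finite (multi)graph: vertex set V, edge set E, and an endpoint map
  giving each edge its set of one (loop) or two endpoints.\<close>
definition graph :: "'v set \<Rightarrow> 'e set \<Rightarrow> ('e \<Rightarrow> 'v set) \<Rightarrow> bool" where
  "graph V E ends \<longleftrightarrow> finite V \<and> finite E \<and>
     (\<forall>e\<in>E. ends e \<subseteq> V \<and> 1 \<le> card (ends e) \<and> card (ends e) \<le> 2)"

definition adj :: "('e \<Rightarrow> 'v set) \<Rightarrow> 'e set \<Rightarrow> 'v \<Rightarrow> 'v \<Rightarrow> bool" where
  "adj ends F u v \<longleftrightarrow> (\<exists>e\<in>F. ends e = {u, v})"

definition reach :: "('e \<Rightarrow> 'v set) \<Rightarrow> 'e set \<Rightarrow> 'v \<Rightarrow> 'v \<Rightarrow> bool" where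
  "reach ends F = (adj ends F)\<^sup>*\<^sup>*"

definition connected_graph :: "'v set \<Rightarrow> 'e set \<Rightarrow> ('e \<Rightarrow> 'v set) \<Rightarrow> bool" where
  "connected_graph V E ends \<longleftrightarrow> (\<forall>u\<in>V. \<forall>v\<in>V. reach ends E u v)"

text \<open>Spanning tree: a set of edges connecting all vertices and acyclic
  (every edge is a bridge, which also excludes loops).\<close>
definition spanning_tree :: "'v set \<Rightarrow> 'e set \<Rightarrow> ('e \<Rightarrow> 'v set) \<Rightarrow> 'e set \<Rightarrow> bool" where
  "spanning_tree V E ends T \<longleftrightarrow> T \<subseteq> E \<and> connected_graph V T ends \<and>
     (\<forall>e\<in>T. \<forall>u v. ends e = {u, v} \<longrightarrow> \<not> reach ends (T - {e}) u v)"

text \<open>An order map assigns to every spanning tree a total order on E,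
  represented as a list enumerating E in increasing order; phi_k(T) = phi T ! (k-1).\<close>
definition order_map :: "'v set \<Rightarrow> 'e set \<Rightarrow> ('e \<Rightarrow> 'v set) \<Rightarrow> ('e set \<Rightarrow> 'e list) \<Rightarrow> bool" where
  "order_map V E ends phi \<longleftrightarrow>
     (\<forall>T. spanning_tree V E ends T \<longrightarrow> distinct (phi T) \<and> set (phi T) = E)"

fun paths :: "'e tree \<Rightarrow> 'e list set" where
  "paths Leaf = {[]}"
| "paths (Node l e r) = (\<lambda>p. e # p) ` (paths l \<union> paths r)"

text \<open>Decision tree: perfect binary tree of depth m-1 (i.e. height m) whose
  root-to-leaf label sequences are permutations of E.\<close>
definition decision_tree :: "'e set \<Rightarrow> 'e tree \<Rightarrow> bool" where
  "decision_tree E t \<longleftrightarrow> complete t \<and> height t = card E \<and>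
     (\<forall>p\<in>paths t. distinct p \<and> set p = E)"

fun dt_ordering :: "'e tree \<Rightarrow> 'e set \<Rightarrow> 'e list" where
  "dt_ordering Leaf T = []"
| "dt_ordering (Node l e r) T = e # dt_ordering (if e \<in> T then r else l) T"

definition tree_compatible :: "'v set \<Rightarrow> 'e set \<Rightarrow> ('e \<Rightarrow> 'v set) \<Rightarrow> ('e set \<Rightarrow> 'e list) \<Rightarrow> bool" where
  "tree_compatible V E ends phi \<longleftrightarrow>
     (\<exists>t. decision_tree E t \<and> (\<forall>T. spanning_tree V E ends T \<longrightarrow> dt_ordering t T = phi T))"

end

theory Submission
  imports Defs
begin

text \<open>Walking down a decision tree, the (k+1)-st label met is determined by the
  first k labels together with which of them lie in T, and inductively the first k
  labels are determined the same way. So a tree-compatible order map has its first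
  k+1 edges determined by the trace of T on its first k. Conversely, under this
  condition all spanning trees whose walk reaches a given node agree on the next
  edge, which becomes the label of that node; nodes reached by no spanning tree get
  an arbitrary unused edge. Nothing about graphs is used: the argument works for
  any family of sets, each equipped with an enumeration of E.\<close>

lemma take_Suc_eq_iff_nth_eq:
  assumes "k < length xs" "length xs = length ys"
  shows "take (Suc k) xs = take (Suc k) ys \<longleftrightarrow> (\<forall>j\<in>{1..k+1}. xs ! (j - 1) = ys ! (j - 1))"
proof
  assume eq: "take (Suc k) xs = take (Suc k) ys"
  show "\<forall>j\<in>{1..k+1}. xs ! (j - 1) = ys ! (j - 1)"
  proof
    fix j
    assume "j \<in> {1..k+1}"
    then have "j - 1 < Suc k"
      by auto
    moreover have "take (Suc k) xs ! (j - 1) = take (Suc k) ys ! (j - 1)"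
      using eq by (simp only:)
    ultimately show "xs ! (j - 1) = ys ! (j - 1)"
      by simp
  qed
next
  assume nth_eq: "\<forall>j\<in>{1..k+1}. xs ! (j - 1) = ys ! (j - 1)"
  have "xs ! i = ys ! i" if "i < Suc k" for i
    using that nth_eq[rule_format, of "Suc i"] by simp
  then show "take (Suc k) xs = take (Suc k) ys"
    using assms by (intro nth_take_lemma) auto
qed

lemma dt_ordering_take_Suc_eq:
  assumes "complete t" "k < height t"
    and "T \<inter> set (take k (dt_ordering t T)) = T' \<inter> set (take k (dt_ordering t T))"
  shows "take (Suc k) (dt_ordering t T) = take (Suc k) (dt_ordering t T')"
  using assms
proof (induction t arbitrary: k)
  case Leaf
  then show ?case by simp
next
  case (Node l e r)
  show ?case
  proof (cases k)
    case 0
    then show ?thesis by simp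
  next
    case (Suc k')
    define s where "s = (if e \<in> T then r else l)"
    have ord_T: "dt_ordering (Node l e r) T = e # dt_ordering s T"
      by (simp add: s_def)
    have "e \<in> T \<longleftrightarrow> e \<in> T'"
      using Node.prems(3) Suc ord_T by auto
    then have ord_T': "dt_ordering (Node l e r) T' = e # dt_ordering s T'"
      by (simp add: s_def)
    have "complete s" "k' < height s"
      using Node.prems(1,2) Suc by (auto simp: s_def)
    moreover have "T \<inter> set (take k' (dt_ordering s T)) = T' \<inter> set (take k' (dt_ordering s T))"
      using Node.prems(3) Suc ord_T by auto
    ultimately have "take (Suc k') (dt_ordering s T) = take (Suc k') (dt_ordering s T')"
      using Node.IH by (auto simp: s_def split: if_splits)
    then show ?thesis
      using ord_T ord_T' Suc by simp
  qed
qed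

definition prefix_determined :: "('e set \<Rightarrow> bool) \<Rightarrow> nat \<Rightarrow> ('e set \<Rightarrow> 'e list) \<Rightarrow> bool" where
  "prefix_determined S n phi \<longleftrightarrow>
     (\<forall>T T' k. S T \<longrightarrow> S T' \<longrightarrow> k < n \<longrightarrow>
        T \<inter> set (take k (phi T)) = T' \<inter> set (take k (phi T)) \<longrightarrow>
        take (Suc k) (phi T) = take (Suc k) (phi T'))"

lemma prefix_determined_iff_nth_eq:
  assumes "\<And>T. S T \<Longrightarrow> length (phi T) = n"
  shows "prefix_determined S n phi \<longleftrightarrow>
    (\<forall>T T'. S T \<longrightarrow> S T' \<longrightarrow> (\<forall>k < n.
      T \<inter> set (take k (phi T)) = T' \<inter> set (take k (phi T)) \<longrightarrow>
      (\<forall>j\<in>{1..k+1}. phi T ! (j - 1) = phi T' ! (j - 1))))"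
proof -
  have "take (Suc k) (phi T) = take (Suc k) (phi T') \<longleftrightarrow>
      (\<forall>j\<in>{1..k+1}. phi T ! (j - 1) = phi T' ! (j - 1))" if "S T" "S T'" "k < n" for T T' k
    by (rule take_Suc_eq_iff_nth_eq) (use assms that in auto)
  then show ?thesis
    unfolding prefix_determined_def by (simp add: imp_conjL)
qed

lemma prefix_determined_if_decision_tree:
  assumes "decision_tree E t" and "\<forall>T. S T \<longrightarrow> dt_ordering t T = phi T"
  shows "prefix_determined S (card E) phi"
  unfolding prefix_determined_def
proof (intro allI impI)
  fix T T' k
  assume "S T" "S T'" "k < card E" "T \<inter> set (take k (phi T)) = T' \<inter> set (take k (phi T))"
  then show "take (Suc k) (phi T) = take (Suc k) (phi T')"
    using assms dt_ordering_take_Suc_eq[of t k T T'] by (simp add: decision_tree_def)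
qed

text \<open>A node of the tree under construction is identified by its label history p
  and the set I of those labels at which the walk turned right.\<close>

definition reaches_node ::
    "('e set \<Rightarrow> bool) \<Rightarrow> ('e set \<Rightarrow> 'e list) \<Rightarrow> 'e list \<Rightarrow> 'e set \<Rightarrow> 'e set \<Rightarrow> bool" where
  "reaches_node S phi p I T \<longleftrightarrow> S T \<and> take (length p) (phi T) = p \<and> T \<inter> set p = I"

definition next_label ::
    "('e set \<Rightarrow> bool) \<Rightarrow> 'e set \<Rightarrow> ('e set \<Rightarrow> 'e list) \<Rightarrow> 'e list \<Rightarrow> 'e set \<Rightarrow> 'e" where
  "next_label S E phi p I =
     (if \<exists>T. reaches_node S phi p I T
      then phi (SOME T. reaches_node S phi p I T) ! length p
      else (SOME e. e \<in> E - set p))"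

fun dtree_of ::
    "('e set \<Rightarrow> bool) \<Rightarrow> 'e set \<Rightarrow> ('e set \<Rightarrow> 'e list) \<Rightarrow> nat \<Rightarrow> 'e list \<Rightarrow> 'e set \<Rightarrow> 'e tree" where
  "dtree_of S E phi 0 p I = Leaf"
| "dtree_of S E phi (Suc n) p I =
     (let e = next_label S E phi p I
      in Node (dtree_of S E phi n (p @ [e]) I) e (dtree_of S E phi n (p @ [e]) (insert e I)))"

lemma complete_dtree_of: "complete (dtree_of S E phi n p I)"
  and height_dtree_of: "height (dtree_of S E phi n p I) = n"
  by (induction n arbitrary: p I) (auto simp: Let_def)

lemma next_label_in:
  assumes enum: "\<And>T. S T \<Longrightarrow> distinct (phi T) \<and> set (phi T) = E"
    and "length p < card E"
  shows "next_label S E phi p I \<in> E - set p"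
proof (cases "\<exists>T. reaches_node S phi p I T")
  case True
  define T where "T = (SOME T. reaches_node S phi p I T)"
  have T: "reaches_node S phi p I T"
    unfolding T_def using True by (rule someI_ex)
  then have enum_T: "distinct (phi T)" "set (phi T) = E" and p: "take (length p) (phi T) = p"
    using enum unfolding reaches_node_def by auto
  then have len: "length p < length (phi T)"
    using assms(2) distinct_card[of "phi T"] by simp
  then have "phi T ! length p \<in> set (drop (length p) (phi T))"
    by (simp add: Cons_nth_drop_Suc[symmetric])
  with enum_T(1) have "phi T ! length p \<notin> set p"
    using set_take_disj_set_drop_if_distinct[of "phi T" "length p" "length p"] p by auto
  moreover have "phi T ! length p \<in> E"
    using enum_T(2) len nth_mem by blast
  ultimately show ?thesis
    using True by (simp add: next_label_def T_def)
next
  case False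
  have "card (set p) < card E"
    using card_length assms(2) by (rule le_less_trans)
  then have "E - set p \<noteq> {}"
    using card_mono[of "set p" E] by auto
  then have "(SOME e. e \<in> E - set p) \<in> E - set p"
    unfolding some_in_eq .
  moreover have "next_label S E phi p I = (SOME e. e \<in> E - set p)"
    using False unfolding next_label_def by (simp only: if_False)
  ultimately show ?thesis
    by (simp only:)
qed

lemma next_label_eq_nth:
  assumes "prefix_determined S (card E) phi"
    and T: "reaches_node S phi p I T" and "length p < card E"
  shows "next_label S E phi p I = phi T ! length p"
proof -
  define T0 where "T0 = (SOME T. reaches_node S phi p I T)"
  have T0: "reaches_node S phi p I T0"
    unfolding T0_def using T by (rule someI)
  have "T0 \<inter> set (take (length p) (phi T0)) = T \<inter> set (take (length p) (phi T0))"
    using T T0 unfolding reaches_node_def by simp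
  then have "take (Suc (length p)) (phi T0) = take (Suc (length p)) (phi T)"
    using assms(1,3) T T0 unfolding prefix_determined_def reaches_node_def by blast
  then have "take (Suc (length p)) (phi T0) ! length p = take (Suc (length p)) (phi T) ! length p"
    by (simp only:)
  then have "phi T0 ! length p = phi T ! length p"
    by simp
  then show ?thesis
    using T by (auto simp: next_label_def T0_def)
qed

lemma paths_dtree_of:
  assumes enum: "\<And>T. S T \<Longrightarrow> distinct (phi T) \<and> set (phi T) = E" and "finite E"
  shows "distinct p \<Longrightarrow> set p \<subseteq> E \<Longrightarrow> length p + n = card E \<Longrightarrow>
    q \<in> paths (dtree_of S E phi n p I) \<Longrightarrow> distinct (p @ q) \<and> set (p @ q) = E"
proof (induction n arbitrary: p I q)
  case 0
  have "card (set p) = card E"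
    using 0 by (simp add: distinct_card)
  then show ?case
    using 0 \<open>finite E\<close> card_subset_eq[of E "set p"] by simp
next
  case (Suc n)
  define e where "e = next_label S E phi p I"
  have e: "e \<in> E - set p"
    unfolding e_def using next_label_in[OF enum] Suc.prems(3) by simp
  from Suc.prems(4) obtain q' I' where q: "q = e # q'"
    and q': "q' \<in> paths (dtree_of S E phi n (p @ [e]) I')"
    by (auto simp: Let_def e_def)
  have "distinct (p @ [e])" "set (p @ [e]) \<subseteq> E" "length (p @ [e]) + n = card E"
    using e Suc.prems by auto
  then have "distinct ((p @ [e]) @ q') \<and> set ((p @ [e]) @ q') = E"
    using q' by (rule Suc.IH)
  then show ?case
    using q by simp
qed

lemma decision_tree_dtree_of:
  assumes "\<And>T. S T \<Longrightarrow> distinct (phi T) \<and> set (phi T) = E" and "finite E"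
  shows "decision_tree E (dtree_of S E phi (card E) [] {})"
  using paths_dtree_of[OF assms, where p = "[]" and n = "card E"]
  unfolding decision_tree_def by (simp add: complete_dtree_of height_dtree_of)

lemma dt_ordering_dtree_of:
  assumes pd: "prefix_determined S (card E) phi"
    and enum: "\<And>T. S T \<Longrightarrow> distinct (phi T) \<and> set (phi T) = E"
  shows "reaches_node S phi p I T \<Longrightarrow> length p + n = card E \<Longrightarrow>
    dt_ordering (dtree_of S E phi n p I) T = drop (length p) (phi T)"
proof (induction n arbitrary: p I)
  case 0
  then have "length (phi T) = card E"
    using enum[of T] distinct_card[of "phi T"] unfolding reaches_node_def by auto
  then show ?case
    using 0 by simp
next
  case (Suc n)
  define e where "e = phi T ! length p"
  have "length (phi T) = card E"
    using Suc.prems(1) enum[of T] distinct_card[of "phi T"] unfolding reaches_node_def by auto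
  then have len: "length p < length (phi T)"
    using Suc.prems(2) by linarith
  have label: "next_label S E phi p I = e"
    unfolding e_def using next_label_eq_nth[OF pd Suc.prems(1)] Suc.prems(2) by simp
  have "reaches_node S phi (p @ [e]) (if e \<in> T then insert e I else I) T"
    using Suc.prems(1) len by (auto simp: reaches_node_def e_def take_Suc_conv_app_nth)
  then have "dt_ordering (dtree_of S E phi n (p @ [e]) (if e \<in> T then insert e I else I)) T =
      drop (Suc (length p)) (phi T)"
    using Suc.IH Suc.prems(2) by simp
  moreover have "drop (length p) (phi T) = e # drop (Suc (length p)) (phi T)"
    using len by (simp add: e_def Cons_nth_drop_Suc)
  ultimately show ?case
    using label by (cases "e \<in> T") (simp_all add: Let_def)
qed

lemma decision_tree_iff_prefix_determined:
  fixes phi :: "'e set \<Rightarrow> 'e list"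
  assumes enum: "\<And>T. S T \<Longrightarrow> distinct (phi T) \<and> set (phi T) = E" and "finite E"
  shows "(\<exists>t. decision_tree E t \<and> (\<forall>T. S T \<longrightarrow> dt_ordering t T = phi T)) \<longleftrightarrow>
    prefix_determined S (card E) phi"
proof
  assume "\<exists>t. decision_tree E t \<and> (\<forall>T. S T \<longrightarrow> dt_ordering t T = phi T)"
  then obtain t where "decision_tree E t" and "\<forall>T. S T \<longrightarrow> dt_ordering t T = phi T"
    by (elim exE conjE)
  then show "prefix_determined S (card E) phi"
    by (rule prefix_determined_if_decision_tree)
next
  assume pd: "prefix_determined S (card E) phi"
  let ?t = "dtree_of S E phi (card E) [] {}"
  have ord: "dt_ordering ?t T = phi T" if "S T" for T
  proof -
    have "dt_ordering ?t T = drop (length ([] :: 'e list)) (phi T)"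
      by (rule dt_ordering_dtree_of[OF pd enum]) (use that in \<open>simp_all add: reaches_node_def\<close>)
    then show ?thesis
      by (simp only: list.size(3) drop_0)
  qed
  have "decision_tree E ?t"
    using assms by (rule decision_tree_dtree_of)
  then show "\<exists>t. decision_tree E t \<and> (\<forall>T. S T \<longrightarrow> dt_ordering t T = phi T)"
    using ord by blast
qed

theorem theorem12p6p1:
  fixes V :: "'v set" and E :: "'e set" and ends :: "'e \<Rightarrow> 'v set"
    and phi :: "'e set \<Rightarrow> 'e list"
  assumes "graph V E ends" and "connected_graph V E ends" and "E \<noteq> {}"
    and "order_map V E ends phi"
  shows "tree_compatible V E ends phi \<longleftrightarrow>
    (\<forall>T T'. spanning_tree V E ends T \<longrightarrow> spanning_tree V E ends T' \<longrightarrow>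
      (\<forall>k < card E.
        T \<inter> set (take k (phi T)) = T' \<inter> set (take k (phi T)) \<longrightarrow>
        (\<forall>j\<in>{1..k+1}. phi T ! (j - 1) = phi T' ! (j - 1))))"
proof -
  let ?S = "spanning_tree V E ends"
  have enum: "distinct (phi T) \<and> set (phi T) = E" if "?S T" for T
    using assms(4) that unfolding order_map_def by blast
  then have len: "length (phi T) = card E" if "?S T" for T
    using that distinct_card[of "phi T"] by simp
  have "finite E"
    using assms(1) unfolding graph_def by blast
  have "tree_compatible V E ends phi \<longleftrightarrow> prefix_determined ?S (card E) phi"
    unfolding tree_compatible_def
    by (rule decision_tree_iff_prefix_determined) (use enum \<open>finite E\<close> in auto)
  with prefix_determined_iff_nth_eq[of ?S phi "card E"] len show ?thesis
    by simp
qed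

end
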